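(* Let $n\ge 1$ and, for $i=1,\dots,n$, let $f_i:\mathbb{R}^{d_i}\to\mathbb{R}$, $A_i\in\mathbb{R}^{p\times d_i}$, and let $b\in\mathbb{R}^p$. Set $d=\sum_i d_i$, $\mathbf{x}=[x_1^\top,\dots,x_n^\top]^\top\in\mathbb{R}^d$, $f(\mathbf{x})=\sum_{i=1}^n f_i(x_i)$, $A=[A_1,\dots,A_n]\in\mathbb{R}^{p\times d}$. Consider the problem $\min_{\mathbf{x}\in\mathbb{R}^d} f(\mathbf{x})$ subject to $A\mathbf{x}=b$, assumed to have at least one optimal solution. Suppose each $f_i$ is differentiable on $\mathbb{R}^{d_i}$ with locally Lipschitz gradient, and $\mu_i$-strongly convex for some $\mu_i>0$, and that there exists $\mathbf{x}$ with $A\mathbf{x}=b$. Fix $\alpha>0$ and consider the dynamics $$\dot{\mathbf{x}}=-\alpha\big(\nabla f(\mathbf{x})+A^\top\lambda\big)-A^\top(A\mathbf{x}-b),\qquad \dot\lambda=A\mathbf{x}-b,$$ where $\nabla f(\mathbf{x})=[\nabla f_1(x_1)^\top,\dots,\nabla f_n(x_n)^\top]^\top$. Then for every initial point with $\mathbf{x}(0)\in\mathbb{R}^d$ arbitrary and $\lambda(0)=0$, the trajectory $(\mathbf{x}(t),\lambda(t))$ converges exponentially to a saddle point of the augmented Lagrangian $\mathcal{L}_\alpha(\mathbf{x},\lambda)=f(\mathbf{x})+\lambda^\top(A\mathbf{x}-b)+\frac{1}{2\alpha}\|A\mathbf{x}-b\|^2$.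
   Context: A saddle point of $\mathcal{L}_\alpha$ is a pair $(\mathbf{x}^*,\lambda^* )\in\mathbb{R}^d\times\mathbb{R}^p$ with $\mathcal{L}_\alpha(\mathbf{x}^*,\lambda)\le\mathcal{L}_\alpha(\mathbf{x}^*,\lambda^* )\le\mathcal{L}_\alpha(\mathbf{x},\lambda^* )$ for all $\mathbf{x},\lambda$. Exponential convergence to $(\mathbf{x}^*,\lambda^* )$ means there are constants $C,c>0$ with $\|(\mathbf{x}(t),\lambda(t))-(\mathbf{x}^*,\lambda^* )\|\le Ce^{-ct}$ for all $t\ge0$. No structural assumption on $A$ (such as full row rank) is made. *)

theory Defs
  imports "HOL-Analysis.Analysis"
begin

definition strongly_convex_on :: "'a::real_normed_vector set \<Rightarrow> ('a \<Rightarrow> real) \<Rightarrow> real \<Rightarrow> bool" where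
  "strongly_convex_on S f mu \<longleftrightarrow> convex S \<and>
     (\<forall>x\<in>S. \<forall>y\<in>S. \<forall>t::real. 0 \<le> t \<and> t \<le> 1 \<longrightarrow>
        f (t *\<^sub>R x + (1 - t) *\<^sub>R y) \<le> t * f x + (1 - t) * f y - mu / 2 * t * (1 - t) * (norm (x - y))\<^sup>2)"

definition locally_lipschitz :: "('a::metric_space \<Rightarrow> 'b::metric_space) \<Rightarrow> bool" where
  "locally_lipschitz g \<longleftrightarrow> (\<forall>x. \<exists>e>0. \<exists>L. L-lipschitz_on (ball x e) g)"

text \<open>Block structure: coordinates of R^d (index type 'd) are partitioned into blocks
  indexed by 'n via blk.  The block-i embedding of R^{d_i} is the subspace block_space blk i,
  and block_proj blk i extracts x_i (padded with zeros).\<close>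
definition block_proj :: "('d \<Rightarrow> 'n) \<Rightarrow> 'n \<Rightarrow> real^'d \<Rightarrow> real^'d" where
  "block_proj blk i x = (\<chi> j. if blk j = i then x $ j else 0)"

definition block_space :: "('d \<Rightarrow> 'n) \<Rightarrow> 'n \<Rightarrow> (real^'d) set" where
  "block_space blk i = range (block_proj blk i)"

definition aug_lagrangian ::
  "real \<Rightarrow> (real^'d \<Rightarrow> real) \<Rightarrow> real^'d^'p \<Rightarrow> real^'p \<Rightarrow> real^'d \<Rightarrow> real^'p \<Rightarrow> real" where
  "aug_lagrangian \<alpha> f A b x l =
     f x + l \<bullet> (A *v x - b) + 1 / (2 * \<alpha>) * (norm (A *v x - b))\<^sup>2"

definition saddle_point :: "('a \<Rightarrow> 'b \<Rightarrow> real) \<Rightarrow> 'a \<Rightarrow> 'b \<Rightarrow> bool" where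
  "saddle_point L xs ls \<longleftrightarrow> (\<forall>x l. L xs l \<le> L xs ls \<and> L xs ls \<le> L x ls)"

end

theory Submission
  imports Defs
begin

(* The first-order condition at a minimiser xs puts grad f(xs) in the row space of A,
   so xs has a Lagrange multiplier ls, which may be taken in the column space of A; by convexity
   (xs, ls) is a saddle point of the augmented Lagrangian.
   Along the flow, V = |x - xs|^2 + alpha |l - ls|^2 has derivative
   -2 alpha <grad f(x) - grad f(xs), x - xs> - 2 |A (x - xs)|^2 <= 0, so x stays in a ball on which
   grad f is Lipschitz. V alone does not dissipate in the dual direction. But l - ls stays in the
   column space of A (l' = A (x - xs) and l(0) = 0), on which A^T is bounded below, so adding the
   cross term 2 eps <l - ls, A (x - xs)> for small eps gives a function W comparable to V with
   W' <= -kappa V. Hence W, V and the distance to (xs, ls) decay exponentially. *)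

section \<open>Real analysis\<close>

lemma has_real_derivative_inner:
  fixes f g :: "real \<Rightarrow> 'a::real_inner"
  assumes "(f has_vector_derivative f') (at t within S)"
    and "(g has_vector_derivative g') (at t within S)"
  shows "((\<lambda>t. f t \<bullet> g t) has_real_derivative f' \<bullet> g t + f t \<bullet> g') (at t within S)"
  using has_derivative_inner[OF assms[unfolded has_vector_derivative_def]]
  unfolding has_field_derivative_def
  by (rule has_derivative_eq_rhs) (auto simp: algebra_simps inner_commute)

lemma nonincreasing_on_halfline:
  fixes \<phi> :: "real \<Rightarrow> real"
  assumes der: "\<And>t. t \<ge> 0 \<Longrightarrow> \<exists>D. (\<phi> has_real_derivative D) (at t within {0..}) \<and> D \<le> 0"
    and "0 \<le> s" "s \<le> t"
  shows "\<phi> t \<le> \<phi> s"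
proof (rule DERIV_nonpos_imp_decreasing_open[OF \<open>s \<le> t\<close>])
  have "continuous (at u within {0..}) \<phi>" if "u \<ge> 0" for u
    using der[OF that] DERIV_continuous by blast
  then have "continuous_on {0..} \<phi>"
    by (simp add: continuous_on_eq_continuous_within)
  then show "continuous_on {s..t} \<phi>"
    by (rule continuous_on_subset) (use \<open>0 \<le> s\<close> in auto)
next
  fix u assume "s < u" "u < t"
  then have "u \<in> interior {0..}" using \<open>0 \<le> s\<close> by simp
  then show "\<exists>D. (\<phi> has_real_derivative D) (at u) \<and> D \<le> 0"
    using der[of u] at_within_interior[of u "{0..}"] \<open>0 \<le> s\<close> \<open>s < u\<close> by auto
qed

lemma exponential_decay_of_derivative_bound:
  fixes \<phi> :: "real \<Rightarrow> real"
  assumes der: "\<And>t. t \<ge> 0 \<Longrightarrow> \<exists>D. (\<phi> has_real_derivative D) (at t within {0..}) \<and> D \<le> - c * \<phi> t"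
    and "t \<ge> 0"
  shows "\<phi> t \<le> \<phi> 0 * exp (- c * t)"
proof -
  have "\<exists>D. ((\<lambda>t. \<phi> t * exp (c * t)) has_real_derivative D) (at u within {0..}) \<and> D \<le> 0"
    if u: "u \<ge> 0" for u
  proof -
    obtain D where D: "(\<phi> has_real_derivative D) (at u within {0..})" "D \<le> - c * \<phi> u"
      using der[OF u] by blast
    have "((\<lambda>t. \<phi> t * exp (c * t)) has_real_derivative (D + c * \<phi> u) * exp (c * u))
        (at u within {0..})"
      using D(1) by (auto intro!: derivative_eq_intros simp: algebra_simps)
    moreover have "(D + c * \<phi> u) * exp (c * u) \<le> 0"
      using D(2) by (simp add: mult_nonpos_nonneg)
    ultimately show ?thesis by blast
  qed
  then have "\<phi> t * exp (c * t) \<le> \<phi> 0"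
    using nonincreasing_on_halfline[of "\<lambda>t. \<phi> t * exp (c * t)" 0 t] \<open>t \<ge> 0\<close> by simp
  then have "\<phi> t * exp (c * t) * exp (- c * t) \<le> \<phi> 0 * exp (- c * t)"
    by (simp add: mult_right_mono)
  then show ?thesis by (simp add: mult.assoc flip: exp_add)
qed

lemma two_mult_le_weighted_squares:
  fixes u v \<delta> :: real
  assumes "\<delta> > 0"
  shows "2 * u * v \<le> \<delta> * u\<^sup>2 + v\<^sup>2 / \<delta>"
proof -
  have "0 \<le> (\<delta> * u - v)\<^sup>2 / \<delta>"
    using assms by simp
  also have "\<dots> = \<delta> * u\<^sup>2 + v\<^sup>2 / \<delta> - 2 * u * v"
    using assms by (simp add: power2_eq_square field_simps)
  finally show ?thesis by simp
qed

section \<open>Strong convexity\<close>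

lemma strongly_convex_on_gradient_inequality:
  fixes f :: "'a::real_inner \<Rightarrow> real"
  assumes sc: "strongly_convex_on S f m" and "x \<in> S" "y \<in> S"
    and grad: "GDERIV f y :> g"
  shows "f y + g \<bullet> (x - y) + m / 2 * (norm (x - y))\<^sup>2 \<le> f x"
proof -
  define \<phi> where "\<phi> s = f (y + s *\<^sub>R (x - y))" for s
  have "((\<lambda>s. y + s *\<^sub>R (x - y)) has_derivative (\<lambda>h. h *\<^sub>R (x - y))) (at 0)"
    by (auto intro!: derivative_eq_intros)
  moreover have "(f has_derivative (\<lambda>h. h \<bullet> g)) (at (y + 0 *\<^sub>R (x - y)))"
    using grad by (simp add: gderiv_def)
  ultimately have "((\<lambda>s. f (y + s *\<^sub>R (x - y))) has_derivative (\<lambda>h. (h *\<^sub>R (x - y)) \<bullet> g)) (at 0)"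
    by (rule has_derivative_compose)
  then have "(\<phi> has_real_derivative g \<bullet> (x - y)) (at 0)"
    unfolding \<phi>_def has_field_derivative_def
    by (rule has_derivative_eq_rhs) (auto simp: inner_commute)
  then have slope: "((\<lambda>s. (\<phi> s - \<phi> 0) / s) \<longlongrightarrow> g \<bullet> (x - y)) (at_right 0)"
    by (simp add: has_field_derivative_iff filterlim_at_split)
  have bound: "((\<lambda>s. f x - f y - m / 2 * (1 - s) * (norm (x - y))\<^sup>2)
      \<longlongrightarrow> f x - f y - m / 2 * (norm (x - y))\<^sup>2) (at_right 0)"
    by (auto intro!: tendsto_eq_intros)
  have "\<forall>\<^sub>F s in at_right 0. s \<in> {0<..<1::real}"
    by (rule eventually_at_right_real) simp
  then have "\<forall>\<^sub>F s in at_right 0. (\<phi> s - \<phi> 0) / s \<le> f x - f y - m / 2 * (1 - s) * (norm (x - y))\<^sup>2"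
  proof (rule eventually_mono)
    fix s :: real assume s: "s \<in> {0<..<1}"
    have "\<phi> s = f (s *\<^sub>R x + (1 - s) *\<^sub>R y)"
      unfolding \<phi>_def by (rule arg_cong[where f = f]) (simp add: algebra_simps)
    also have "\<dots> \<le> s * f x + (1 - s) * f y - m / 2 * s * (1 - s) * (norm (x - y))\<^sup>2"
      using sc \<open>x \<in> S\<close> \<open>y \<in> S\<close> s unfolding strongly_convex_on_def by auto
    finally have "\<phi> s - \<phi> 0 \<le> s * (f x - f y - m / 2 * (1 - s) * (norm (x - y))\<^sup>2)"
      by (simp add: \<phi>_def algebra_simps)
    then show "(\<phi> s - \<phi> 0) / s \<le> f x - f y - m / 2 * (1 - s) * (norm (x - y))\<^sup>2"
      using s by (simp add: divide_le_eq mult.commute)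
  qed
  from tendsto_le[OF _ bound slope this] show ?thesis by simp
qed

lemma strongly_convex_on_gradient_monotone:
  fixes f :: "'a::real_inner \<Rightarrow> real"
  assumes "strongly_convex_on S f m" and "x \<in> S" "y \<in> S"
    and "GDERIV f x :> gx" "GDERIV f y :> gy"
  shows "m * (norm (x - y))\<^sup>2 \<le> (gx - gy) \<bullet> (x - y)"
  using strongly_convex_on_gradient_inequality[OF assms(1-3,5)]
    strongly_convex_on_gradient_inequality[OF assms(1,3,2,4)]
  by (simp add: norm_minus_commute inner_diff_left inner_diff_right)

lemma norm_block_proj_sum:
  fixes blk :: "'d::finite \<Rightarrow> 'n::finite"
  shows "(\<Sum>i\<in>UNIV. (norm (block_proj blk i v))\<^sup>2) = (norm v)\<^sup>2"
proof -
  have "(\<Sum>i\<in>UNIV. (norm (block_proj blk i v))\<^sup>2)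
      = (\<Sum>i\<in>UNIV. \<Sum>j\<in>UNIV. if blk j = i then v $ j * v $ j else 0)"
    by (simp add: power2_norm_eq_inner inner_vec_def block_proj_def if_distrib cong: if_cong)
  also have "\<dots> = (\<Sum>j\<in>UNIV. \<Sum>i\<in>UNIV. if blk j = i then v $ j * v $ j else 0)"
    by (rule sum.swap)
  also have "\<dots> = (norm v)\<^sup>2"
    by (simp add: power2_norm_eq_inner inner_vec_def)
  finally show ?thesis .
qed

lemma block_proj_linear: "linear (block_proj blk i)"
  by (rule linearI) (simp_all add: block_proj_def vec_eq_iff)

lemma strongly_convex_on_block_sum:
  fixes blk :: "'d::finite \<Rightarrow> 'n::finite" and fi :: "'n \<Rightarrow> real^'d \<Rightarrow> real"
  assumes block_dep: "\<And>i z. fi i z = fi i (block_proj blk i z)"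
    and sconv: "\<And>i. strongly_convex_on (block_space blk i) (fi i) (mu i)"
  shows "strongly_convex_on UNIV (\<lambda>z. \<Sum>i\<in>UNIV. fi i z) (Min (range mu))"
  unfolding strongly_convex_on_def
proof (intro conjI convex_UNIV ballI allI impI)
  fix x y :: "real^'d" and t :: real
  assume t: "0 \<le> t \<and> t \<le> 1"
  let ?m = "Min (range mu)"
  let ?P = "block_proj blk"
  have "fi i (t *\<^sub>R x + (1 - t) *\<^sub>R y)
      \<le> t * fi i x + (1 - t) * fi i y - ?m / 2 * t * (1 - t) * (norm (?P i (x - y)))\<^sup>2" for i
  proof -
    have "fi i (t *\<^sub>R x + (1 - t) *\<^sub>R y) = fi i (t *\<^sub>R ?P i x + (1 - t) *\<^sub>R ?P i y)"
      by (subst block_dep) (simp add: linear_add[OF block_proj_linear] linear_scale[OF block_proj_linear])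
    also have "\<dots> \<le> t * fi i (?P i x) + (1 - t) * fi i (?P i y)
        - mu i / 2 * t * (1 - t) * (norm (?P i x - ?P i y))\<^sup>2"
      using sconv[of i] t unfolding strongly_convex_on_def block_space_def by blast
    also have "\<dots> \<le> t * fi i x + (1 - t) * fi i y - ?m / 2 * t * (1 - t) * (norm (?P i (x - y)))\<^sup>2"
    proof -
      have "?m \<le> mu i" by simp
      then have "?m / 2 * (t * (1 - t) * (norm (?P i (x - y)))\<^sup>2)
          \<le> mu i / 2 * (t * (1 - t) * (norm (?P i (x - y)))\<^sup>2)"
        using t by (intro mult_right_mono) auto
      then show ?thesis
        using block_dep[of i x] block_dep[of i y] by (simp add: linear_diff[OF block_proj_linear] mult.assoc)
    qed
    finally show ?thesis .
  qed
  then have "(\<Sum>i\<in>UNIV. fi i (t *\<^sub>R x + (1 - t) *\<^sub>R y))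
      \<le> (\<Sum>i\<in>UNIV. t * fi i x + (1 - t) * fi i y - ?m / 2 * t * (1 - t) * (norm (?P i (x - y)))\<^sup>2)"
    by (rule sum_mono)
  also have "\<dots> = t * (\<Sum>i\<in>UNIV. fi i x) + (1 - t) * (\<Sum>i\<in>UNIV. fi i y)
      - ?m / 2 * t * (1 - t) * (\<Sum>i\<in>UNIV. (norm (?P i (x - y)))\<^sup>2)"
    by (simp add: sum.distrib sum_subtractf sum_distrib_left)
  also have "\<dots> = t * (\<Sum>i\<in>UNIV. fi i x) + (1 - t) * (\<Sum>i\<in>UNIV. fi i y)
      - ?m / 2 * t * (1 - t) * (norm (x - y))\<^sup>2"
    by (simp only: norm_block_proj_sum)
  finally show "(\<Sum>i\<in>UNIV. fi i (t *\<^sub>R x + (1 - t) *\<^sub>R y))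
      \<le> t * (\<Sum>i\<in>UNIV. fi i x) + (1 - t) * (\<Sum>i\<in>UNIV. fi i y)
        - ?m / 2 * t * (1 - t) * (norm (x - y))\<^sup>2" .
qed

section \<open>Local Lipschitz continuity\<close>

lemma locally_lipschitz_add:
  fixes f g :: "'a::metric_space \<Rightarrow> 'b::real_normed_vector"
  assumes "locally_lipschitz f" "locally_lipschitz g"
  shows "locally_lipschitz (\<lambda>x. f x + g x)"
  unfolding locally_lipschitz_def
proof
  fix x
  obtain e L where "e > 0" "L-lipschitz_on (ball x e) f"
    using assms(1) unfolding locally_lipschitz_def by blast
  moreover obtain e' L' where "e' > 0" "L'-lipschitz_on (ball x e') g"
    using assms(2) unfolding locally_lipschitz_def by blast
  ultimately have "(L + L')-lipschitz_on (ball x (min e e')) (\<lambda>x. f x + g x)"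
    by (intro lipschitz_on_add) (auto elim: lipschitz_on_subset)
  then show "\<exists>e>0. \<exists>L. L-lipschitz_on (ball x e) (\<lambda>x. f x + g x)"
    using \<open>e > 0\<close> \<open>e' > 0\<close> by (intro exI[of _ "min e e'"]) auto
qed

lemma locally_lipschitz_sum:
  fixes g :: "'i \<Rightarrow> 'a::metric_space \<Rightarrow> 'b::real_normed_vector"
  assumes "finite I" "\<And>i. i \<in> I \<Longrightarrow> locally_lipschitz (g i)"
  shows "locally_lipschitz (\<lambda>x. \<Sum>i\<in>I. g i x)"
  using assms
proof (induction I rule: finite_induct)
  case empty
  show ?case
    unfolding locally_lipschitz_def sum.empty using lipschitz_on_constant zero_less_one by blast
next
  case (insert i I)
  then have "locally_lipschitz (\<lambda>x. g i x + (\<Sum>i\<in>I. g i x))"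
    by (intro locally_lipschitz_add) auto
  with insert.hyps show ?case by simp
qed

lemma locally_lipschitz_imp_lipschitz_on_compact:
  fixes g :: "'a::metric_space \<Rightarrow> 'b::metric_space"
  assumes "locally_lipschitz g" "compact K"
  obtains L where "L-lipschitz_on K g"
proof -
  \<comment> \<open>View \<open>g\<close> as a family indexed by the trivial parameter set \<open>{0}\<close>, to which the library's
    compactness argument for \<open>local_lipschitz\<close> applies.\<close>
  have "local_lipschitz {0::real} K (\<lambda>_. g)"
  proof (rule local_lipschitzI)
    fix t z assume "t \<in> {0::real}" "z \<in> K"
    obtain e L where "e > 0" and L: "L-lipschitz_on (ball z e) g"
      using assms(1) unfolding locally_lipschitz_def by blast
    have "L-lipschitz_on (cball z (e / 2) \<inter> K) g"
      by (rule lipschitz_on_subset[OF L]) (use \<open>e > 0\<close> in auto)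
    with \<open>e > 0\<close> show "\<exists>u>0. \<exists>L. \<forall>t\<in>cball t u \<inter> {0::real}. L-lipschitz_on (cball z u \<inter> K) g"
      by (intro exI[of _ "e / 2"]) auto
  qed
  from local_lipschitz_compact_implies_lipschitz[OF this assms(2)] that show thesis
    by (metis compact_sing continuous_on_const singletonI)
qed

section \<open>The constraint matrix\<close>

lemma subspace_range_matrix_vector_mult: "subspace (range ((*v) (A::real^'d::finite^'p::finite)))"
  by (rule linear_subspace_image) (auto intro: subspace_UNIV)

lemma null_space_transpose:
  fixes A :: "real^'d::finite^'p::finite"
  shows "{v. v v* A = 0} = (range ((*v) A))\<^sup>\<bottom>"
proof -
  have "(\<lambda>v. transpose A *v v) -` {0} = (range (adjoint (\<lambda>v. transpose A *v v)))\<^sup>\<bottom>"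
    by (rule ker_orthogonal_comp_adjoint) (rule matrix_vector_mul_linear)
  then show ?thesis
    unfolding adjoint_matrix transpose_transpose by (simp add: vimage_def)
qed

lemma orthogonal_null_space_imp_row_space:
  fixes A :: "real^'d::finite^'p::finite"
  assumes "\<And>w. A *v w = 0 \<Longrightarrow> v \<bullet> w = 0"
  shows "\<exists>u. v = u v* A"
proof -
  have "{w. A *v w = 0} = (range ((*v) (transpose A)))\<^sup>\<bottom>"
    using null_space_transpose[of "transpose A"] by simp
  then have "v \<in> (range ((*v) (transpose A)))\<^sup>\<bottom>\<^sup>\<bottom>"
    using assms by (auto simp: orthogonal_comp_def orthogonal_def inner_commute)
  then have "v \<in> range ((*v) (transpose A))"
    by (simp only: orthogonal_comp_self[OF subspace_range_matrix_vector_mult])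
  then show ?thesis by auto
qed

lemma vector_matrix_bounded_below_on_column_space:
  fixes A :: "real^'d::finite^'p::finite"
  obtains c where "c > 0" "\<And>u. u \<in> range ((*v) A) \<Longrightarrow> c * norm u \<le> norm (u v* A)"
proof -
  have sub: "subspace (range ((*v) A))"
    by (rule subspace_range_matrix_vector_mult)
  have "\<forall>u\<in>range ((*v) A). transpose A *v u = 0 \<longrightarrow> u = 0"
    using null_space_transpose[of A] orthogonal_Int_0[OF sub] by auto
  then have "\<exists>c>0. \<forall>u\<in>range ((*v) A). c * norm u \<le> norm (transpose A *v u)"
    by (rule injective_imp_isometric[OF closed_subspace[OF sub] sub matrix_vector_mul_bounded_linear])
  then have "\<exists>c>0. \<forall>u\<in>range ((*v) A). c * norm u \<le> norm (u v* A)"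
    by simp
  with that show thesis by blast
qed

lemma matrix_norm_bound:
  fixes A :: "real^'d::finite^'p::finite"
  obtains K where "0 \<le> K" "\<And>z. norm (A *v z) \<le> K * norm z" "\<And>v. norm (v v* A) \<le> K * norm v"
proof -
  obtain K1 where K1: "\<And>z. norm (A *v z) \<le> norm z * K1"
    using bounded_linear.nonneg_bounded[OF matrix_vector_mul_bounded_linear[of A]] by blast
  obtain K2 where K2: "K2 \<ge> 0" "\<And>v. norm (transpose A *v v) \<le> norm v * K2"
    using bounded_linear.nonneg_bounded[OF matrix_vector_mul_bounded_linear[of "transpose A"]] by blast
  have "norm (A *v z) \<le> max K1 K2 * norm z" for z
    using K1[of z] mult_left_mono[OF max.cobounded1[of K1 K2] norm_ge_zero[of z]] by (simp add: mult.commute)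
  moreover have "norm (v v* A) \<le> max K1 K2 * norm v" for v
    using K2(2)[of v] mult_left_mono[OF max.cobounded2[of K2 K1] norm_ge_zero[of v]] by (simp add: mult.commute)
  ultimately show thesis
    using K2(1) that[of "max K1 K2"] by simp
qed

lemma constrained_minimum_lagrange_multiplier:
  fixes f :: "real^'d::finite \<Rightarrow> real" and A :: "real^'d^'p::finite"
  assumes grad: "GDERIV f xs :> g" and "A *v xs = b"
    and min: "\<And>y. A *v y = b \<Longrightarrow> f xs \<le> f y"
  shows "\<exists>ls\<in>range ((*v) A). g + ls v* A = 0"
proof -
  have "g \<bullet> w = 0" if "A *v w = 0" for w
  proof -
    have "((\<lambda>s. xs + s *\<^sub>R w) has_derivative (\<lambda>s. s *\<^sub>R w)) (at 0)"
      by (auto intro!: derivative_eq_intros)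
    moreover have "(f has_derivative (\<lambda>h. h \<bullet> g)) (at (xs + 0 *\<^sub>R w))"
      using grad by (simp add: gderiv_def)
    ultimately have "((\<lambda>s. f (xs + s *\<^sub>R w)) has_derivative (\<lambda>s. (s *\<^sub>R w) \<bullet> g)) (at 0)"
      by (rule has_derivative_compose)
    then have "((\<lambda>s. f (xs + s *\<^sub>R w)) has_real_derivative g \<bullet> w) (at 0)"
      unfolding has_field_derivative_def
      by (rule has_derivative_eq_rhs) (auto simp: inner_commute)
    moreover have "f (xs + 0 *\<^sub>R w) \<le> f (xs + s *\<^sub>R w)" for s
      using min \<open>A *v xs = b\<close> \<open>A *v w = 0\<close> by (simp add: algebra_simps)
    ultimately show ?thesis
      using DERIV_local_min[of _ _ 0 1] by simp
  qed
  then obtain u where u: "g = u v* A"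
    using orthogonal_null_space_imp_row_space by blast
  obtain p r where p: "p \<in> range ((*v) A)" and "r \<in> (range ((*v) A))\<^sup>\<bottom>" "- u = p + r"
    using subspace_sum_orthogonal_comp[OF subspace_range_matrix_vector_mult, of A]
    by (metis UNIV_I set_plus_elim)
  have "r v* A = 0"
    using \<open>r \<in> _\<close> null_space_transpose[of A] by blast
  moreover have "u + p + r = 0"
    using \<open>- u = p + r\<close> by (metis add.assoc add.right_inverse)
  ultimately have "g + p v* A = 0"
    using u vector_matrix_left_distrib[of "u + p" r A] by (simp add: vector_matrix_left_distrib)
  with p show ?thesis by blast
qed

lemma saddle_point_aug_lagrangian:
  fixes f :: "real^'d::finite \<Rightarrow> real" and A :: "real^'d^'p::finite"
  assumes "0 \<le> \<alpha>" and "A *v xs = b"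
    and subgradient: "\<And>z. f xs + g \<bullet> (z - xs) \<le> f z" and kkt: "g + ls v* A = 0"
  shows "saddle_point (aug_lagrangian \<alpha> f A b) xs ls"
  unfolding saddle_point_def aug_lagrangian_def
proof (intro allI conjI)
  fix z :: "real^'d" and lam :: "real^'p"
  have "ls \<bullet> (A *v z - b) = (ls v* A) \<bullet> (z - xs)"
    using \<open>A *v xs = b\<close> by (simp add: dot_lmul_matrix matrix_vector_mult_diff_distrib)
  also have "\<dots> = - (g \<bullet> (z - xs))"
    using kkt by (metis add.commute eq_neg_iff_add_eq_0 inner_minus_left)
  finally have "f xs \<le> f z + ls \<bullet> (A *v z - b)"
    using subgradient[of z] by simp
  moreover have "0 \<le> 1 / (2 * \<alpha>) * (norm (A *v z - b))\<^sup>2"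
    using \<open>0 \<le> \<alpha>\<close> by simp
  ultimately show "f xs + ls \<bullet> (A *v xs - b) + 1 / (2 * \<alpha>) * (norm (A *v xs - b))\<^sup>2
      \<le> f z + ls \<bullet> (A *v z - b) + 1 / (2 * \<alpha>) * (norm (A *v z - b))\<^sup>2"
    using \<open>A *v xs = b\<close> by simp
qed (use \<open>A *v xs = b\<close> in simp)

lemma constrained_minimum_saddle_point:
  fixes f :: "real^'d::finite \<Rightarrow> real" and A :: "real^'d^'p::finite"
  assumes "strongly_convex_on UNIV f m" "0 \<le> m" and grad: "GDERIV f xs :> g" and "0 \<le> \<alpha>"
    and xs: "A *v xs = b" and xs_min: "\<And>y. A *v y = b \<Longrightarrow> f xs \<le> f y"
  obtains ls where "ls \<in> range ((*v) A)" "g + ls v* A = 0"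
    "saddle_point (aug_lagrangian \<alpha> f A b) xs ls"
proof -
  obtain ls where ls: "ls \<in> range ((*v) A)" and kkt: "g + ls v* A = 0"
    using constrained_minimum_lagrange_multiplier[OF grad xs xs_min] by blast
  have "f xs + g \<bullet> (z - xs) \<le> f z" for z
  proof -
    have "0 \<le> m / 2 * (norm (z - xs))\<^sup>2"
      using \<open>0 \<le> m\<close> by simp
    then show ?thesis
      using strongly_convex_on_gradient_inequality[OF assms(1) UNIV_I[of z] UNIV_I[of xs] grad]
      by linarith
  qed
  then have "saddle_point (aug_lagrangian \<alpha> f A b) xs ls"
    by (rule saddle_point_aug_lagrangian[OF \<open>0 \<le> \<alpha>\<close> xs _ kkt])
  with ls kkt show thesis
    by (rule that)
qed

section \<open>The primal-dual flow\<close>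

locale primal_dual_flow =
  fixes A :: "real^'d::finite^'p::finite" and b :: "real^'p"
    and G :: "real^'d \<Rightarrow> real^'d" and \<alpha> \<mu> :: real
    and x :: "real \<Rightarrow> real^'d" and l :: "real \<Rightarrow> real^'p"
    and xs :: "real^'d" and ls :: "real^'p"
  assumes alpha_pos: "\<alpha> > 0" and mu_pos: "\<mu> > 0"
    and strongly_monotone: "\<And>u v. \<mu> * (norm (u - v))\<^sup>2 \<le> (G u - G v) \<bullet> (u - v)"
    and G_locally_lipschitz: "locally_lipschitz G"
    and xs_feasible: "A *v xs = b"
    and kkt: "G xs + ls v* A = 0" and multiplier_range: "ls \<in> range ((*v) A)"
    and ode_x: "\<And>t. t \<ge> 0 \<Longrightarrow>
        (x has_vector_derivative
           (- \<alpha> *\<^sub>R (G (x t) + transpose A *v l t) - transpose A *v (A *v x t - b)))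
        (at t within {0..})"
    and ode_l: "\<And>t. t \<ge> 0 \<Longrightarrow> (l has_vector_derivative (A *v x t - b)) (at t within {0..})"
    and l_initial: "l 0 = 0"
begin

abbreviation "x_err t \<equiv> x t - xs"
abbreviation "l_err t \<equiv> l t - ls"
abbreviation "grad_err t \<equiv> G (x t) - G xs"

lemma residual_eq: "A *v x t - b = A *v x_err t"
  using xs_feasible by (simp add: matrix_vector_mult_diff_distrib)

lemma x_err_derivative:
  assumes "t \<ge> 0"
  shows "(x_err has_vector_derivative
      - \<alpha> *\<^sub>R (grad_err t + l_err t v* A) - (A *v x_err t) v* A) (at t within {0..})"
proof -
  have "ls v* A = - G xs"
    using kkt by (simp add: eq_neg_iff_add_eq_0 add.commute)
  then have "- \<alpha> *\<^sub>R (G (x t) + transpose A *v l t) - transpose A *v (A *v x t - b)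
      = - \<alpha> *\<^sub>R (grad_err t + l_err t v* A) - (A *v x_err t) v* A"
    by (simp add: residual_eq vector_matrix_mult_diff_distrib)
  with ode_x[OF assms] show ?thesis
    by (simp only: has_vector_derivative_diff_const)
qed

lemma l_err_derivative:
  assumes "t \<ge> 0"
  shows "(l_err has_vector_derivative A *v x_err t) (at t within {0..})"
  using ode_l[OF assms] by (simp add: has_vector_derivative_diff_const residual_eq)

definition energy :: "real \<Rightarrow> real" where
  "energy t = (norm (x_err t))\<^sup>2 + \<alpha> * (norm (l_err t))\<^sup>2"

lemma energy_nonneg: "energy t \<ge> 0"
  using alpha_pos by (simp add: energy_def)

lemma energy_derivative:
  assumes "t \<ge> 0"
  shows "(energy has_real_derivative
      - 2 * \<alpha> * (grad_err t \<bullet> x_err t) - 2 * (norm (A *v x_err t))\<^sup>2) (at t within {0..})"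
proof -
  have dot: "(- \<alpha> *\<^sub>R (g + n v* A) - (A *v e) v* A) \<bullet> e
      = - \<alpha> * (g \<bullet> e) - \<alpha> * (n \<bullet> (A *v e)) - (norm (A *v e))\<^sup>2" for e g n
    by (simp add: dot_lmul_matrix power2_norm_eq_inner algebra_simps)
  have "energy = (\<lambda>t. x_err t \<bullet> x_err t + \<alpha> * (l_err t \<bullet> l_err t))"
    by (simp add: energy_def power2_norm_eq_inner fun_eq_iff)
  moreover have "((\<lambda>t. x_err t \<bullet> x_err t + \<alpha> * (l_err t \<bullet> l_err t)) has_real_derivative
      2 * ((- \<alpha> *\<^sub>R (grad_err t + l_err t v* A) - (A *v x_err t) v* A) \<bullet> x_err t)
      + \<alpha> * (2 * (l_err t \<bullet> (A *v x_err t)))) (at t within {0..})"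
    using DERIV_add[OF has_real_derivative_inner[OF x_err_derivative[OF assms] x_err_derivative[OF assms]]
        DERIV_cmult[OF has_real_derivative_inner[OF l_err_derivative[OF assms] l_err_derivative[OF assms]]]]
    by (simp add: inner_commute[of "x_err t"] inner_commute[of "A *v x_err t"])
  ultimately show ?thesis
    by (simp only: dot) (simp add: algebra_simps)
qed

lemma energy_nonincreasing:
  assumes "t \<ge> 0"
  shows "energy t \<le> energy 0"
proof (rule nonincreasing_on_halfline[OF _ order_refl assms])
  fix s :: real assume "s \<ge> 0"
  have "0 \<le> \<mu> * (norm (x_err s))\<^sup>2"
    using mu_pos by simp
  then have "0 \<le> grad_err s \<bullet> x_err s"
    using strongly_monotone[of "x s" xs] by linarith
  then have "0 \<le> \<alpha> * (grad_err s \<bullet> x_err s)"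
    using alpha_pos by simp
  then have "- 2 * \<alpha> * (grad_err s \<bullet> x_err s) - 2 * (norm (A *v x_err s))\<^sup>2 \<le> 0"
    using zero_le_power2[of "norm (A *v x_err s)"] by linarith
  with energy_derivative[OF \<open>s \<ge> 0\<close>]
  show "\<exists>D. (energy has_real_derivative D) (at s within {0..}) \<and> D \<le> 0"
    by blast
qed

lemma x_err_bounded:
  assumes "t \<ge> 0"
  shows "norm (x_err t) \<le> sqrt (energy 0)"
proof -
  have "0 \<le> \<alpha> * (norm (l_err t))\<^sup>2"
    using alpha_pos by simp
  then have "(norm (x_err t))\<^sup>2 \<le> energy 0"
    using energy_nonincreasing[OF assms] unfolding energy_def by linarith
  then show ?thesis
    by (simp add: real_le_rsqrt)
qed

lemma l_err_in_column_space:
  assumes "t \<ge> 0"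
  shows "l_err t \<in> range ((*v) A)"
proof -
  have "r \<bullet> l t = 0" if r: "r \<in> (range ((*v) A))\<^sup>\<bottom>" for r
  proof -
    have "r v* A = 0"
      using r null_space_transpose[of A] by blast
    then have "((\<lambda>s. r \<bullet> l s) has_derivative (\<lambda>h. 0)) (at s within {0..})" if "s \<in> {0..}" for s
      using bounded_linear.has_vector_derivative[OF bounded_linear_inner_right ode_l, of s r] that
      by (simp add: has_vector_derivative_def residual_eq flip: dot_lmul_matrix)
    then obtain c where "\<forall>s\<in>{0..}. r \<bullet> l s = c"
      using has_derivative_zero_constant[OF convex_real_interval(1)] by blast
    then show ?thesis
      using assms l_initial by force
  qed
  then have "l t \<in> (range ((*v) A))\<^sup>\<bottom>\<^sup>\<bottom>"
    by (auto simp: orthogonal_comp_def orthogonal_def inner_commute)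
  then show ?thesis
    using multiplier_range subspace_diff[OF subspace_range_matrix_vector_mult]
    by (simp add: orthogonal_comp_self[OF subspace_range_matrix_vector_mult])
qed

definition perturbed_energy :: "real \<Rightarrow> real \<Rightarrow> real" where
  "perturbed_energy \<epsilon> t = energy t + 2 * \<epsilon> * (l_err t \<bullet> (A *v x_err t))"

lemma perturbed_energy_bounds:
  assumes "0 \<le> \<epsilon>" "0 \<le> K" and K: "\<And>z. norm (A *v z) \<le> K * norm z"
    and small: "\<epsilon> * K \<le> min 1 \<alpha> / 2"
  shows "energy t / 2 \<le> perturbed_energy \<epsilon> t" and "perturbed_energy \<epsilon> t \<le> 3 / 2 * energy t"
proof -
  define E N P where "E = norm (x_err t)" and "N = norm (l_err t)"
    and "P = l_err t \<bullet> (A *v x_err t)"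
  have "\<bar>P\<bar> \<le> N * (K * E)"
    unfolding E_def N_def P_def
    by (rule order_trans[OF Cauchy_Schwarz_ineq2 mult_left_mono[OF K norm_ge_zero]])
  then have "2 * \<epsilon> * \<bar>P\<bar> \<le> 2 * \<epsilon> * (N * (K * E))"
    using \<open>0 \<le> \<epsilon>\<close> by (intro mult_left_mono) auto
  also have "\<dots> = \<epsilon> * K * (2 * N * E)"
    by (simp add: algebra_simps)
  also have "\<dots> \<le> \<epsilon> * K * (E\<^sup>2 + N\<^sup>2)"
    using \<open>0 \<le> \<epsilon>\<close> \<open>0 \<le> K\<close> sum_squares_bound[of N E]
    by (intro mult_left_mono) (auto simp: algebra_simps)
  also have "\<dots> \<le> min 1 \<alpha> / 2 * (E\<^sup>2 + N\<^sup>2)"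
    using small by (intro mult_right_mono) auto
  also have "\<dots> \<le> energy t / 2"
  proof -
    have "min 1 \<alpha> * E\<^sup>2 \<le> 1 * E\<^sup>2" "min 1 \<alpha> * N\<^sup>2 \<le> \<alpha> * N\<^sup>2"
      by (intro mult_right_mono; simp)+
    then show ?thesis
      unfolding energy_def E_def[symmetric] N_def[symmetric] by (simp add: algebra_simps)
  qed
  finally have "\<bar>2 * \<epsilon> * P\<bar> \<le> energy t / 2"
    using \<open>0 \<le> \<epsilon>\<close> by (simp add: abs_mult)
  then show "energy t / 2 \<le> perturbed_energy \<epsilon> t" and "perturbed_energy \<epsilon> t \<le> 3 / 2 * energy t"
    unfolding perturbed_energy_def P_def[symmetric] by linarith+
qed

definition perturbed_energy_rate :: "real \<Rightarrow> real \<Rightarrow> real" where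
  "perturbed_energy_rate \<epsilon> t =
     - 2 * \<alpha> * (grad_err t \<bullet> x_err t) - 2 * (norm (A *v x_err t))\<^sup>2
     + 2 * \<epsilon> * ((norm (A *v x_err t))\<^sup>2 - \<alpha> * ((l_err t v* A) \<bullet> grad_err t)
         - \<alpha> * (norm (l_err t v* A))\<^sup>2 - (l_err t v* A) \<bullet> ((A *v x_err t) v* A))"

lemma perturbed_energy_derivative:
  assumes "t \<ge> 0"
  shows "(perturbed_energy \<epsilon> has_real_derivative perturbed_energy_rate \<epsilon> t) (at t within {0..})"
proof -
  have dot: "n \<bullet> (A *v (- \<alpha> *\<^sub>R (g + n v* A) - (A *v e) v* A))
      = - \<alpha> * ((n v* A) \<bullet> g) - \<alpha> * (norm (n v* A))\<^sup>2 - (n v* A) \<bullet> ((A *v e) v* A)" for n g e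
    by (simp add: dot_lmul_matrix[symmetric] power2_norm_eq_inner algebra_simps)
  have "((\<lambda>t. A *v x_err t) has_vector_derivative
      A *v (- \<alpha> *\<^sub>R (grad_err t + l_err t v* A) - (A *v x_err t) v* A)) (at t within {0..})"
    by (rule bounded_linear.has_vector_derivative[OF matrix_vector_mul_bounded_linear
          x_err_derivative[OF assms]])
  from DERIV_add[OF energy_derivative[OF assms]
      DERIV_cmult[OF has_real_derivative_inner[OF l_err_derivative[OF assms] this]], of "2 * \<epsilon>"]
  show ?thesis
    unfolding perturbed_energy_def[abs_def] perturbed_energy_rate_def dot
    by (simp add: power2_norm_eq_inner algebra_simps)
qed

lemma perturbed_energy_rate_le:
  assumes "\<epsilon> > 0"
    and K: "\<And>v. norm (v v* A) \<le> K * norm v"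
    and lipschitz_bound: "norm (grad_err t) \<le> L * norm (x_err t)"
    and eps_L: "2 * \<epsilon> * L\<^sup>2 \<le> \<mu>" and eps_K: "\<epsilon> * (1 + K\<^sup>2 / \<alpha>) \<le> 1"
  shows "perturbed_energy_rate \<epsilon> t
    \<le> - \<alpha> * \<mu> * (norm (x_err t))\<^sup>2 - \<epsilon> * \<alpha> * (norm (l_err t v* A))\<^sup>2"
proof -
  define E Ra Q where "E = norm (x_err t)" and "Ra = norm (A *v x_err t)"
    and "Q = norm (l_err t v* A)"
  define ge qg qr where "ge = grad_err t \<bullet> x_err t" and "qg = (l_err t v* A) \<bullet> grad_err t"
    and "qr = (l_err t v* A) \<bullet> ((A *v x_err t) v* A)"
  have "\<mu> * E\<^sup>2 \<le> ge"
    unfolding E_def ge_def by (rule strongly_monotone)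
  \<comment> \<open>Young's inequality absorbs both cross terms into half of the dual dissipation \<open>- 2 \<epsilon> \<alpha> Q\<^sup>2\<close>.\<close>
  have "- qg \<le> Q * (L * E)"
    unfolding qg_def Q_def E_def
    by (rule abs_le_D2[OF order_trans[OF Cauchy_Schwarz_ineq2 mult_left_mono[OF lipschitz_bound norm_ge_zero]]])
  then have qg: "- qg \<le> 1 / 4 * Q\<^sup>2 + L\<^sup>2 * E\<^sup>2"
    using two_mult_le_weighted_squares[of "1 / 2" Q "L * E"] by (simp add: power_mult_distrib)
  have "- qr \<le> Q * (K * Ra)"
    unfolding qr_def Q_def Ra_def
    by (rule abs_le_D2[OF order_trans[OF Cauchy_Schwarz_ineq2 mult_left_mono[OF K norm_ge_zero]]])
  then have qr: "- qr \<le> \<alpha> / 4 * Q\<^sup>2 + K\<^sup>2 / \<alpha> * Ra\<^sup>2"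
    using two_mult_le_weighted_squares[of "\<alpha> / 2" Q "K * Ra"] alpha_pos
    by (simp add: power_mult_distrib)
  have "\<alpha> * (\<mu> * E\<^sup>2) \<le> \<alpha> * ge"
    using \<open>\<mu> * E\<^sup>2 \<le> ge\<close> alpha_pos by (intro mult_left_mono) auto
  moreover have "\<epsilon> * \<alpha> * (- qg) \<le> \<epsilon> * \<alpha> * (1 / 4 * Q\<^sup>2 + L\<^sup>2 * E\<^sup>2)"
    using qg \<open>\<epsilon> > 0\<close> alpha_pos by (intro mult_left_mono) auto
  moreover have "\<epsilon> * (- qr) \<le> \<epsilon> * (\<alpha> / 4 * Q\<^sup>2 + K\<^sup>2 / \<alpha> * Ra\<^sup>2)"
    using qr \<open>\<epsilon> > 0\<close> by (intro mult_left_mono) auto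
  moreover have "\<alpha> * E\<^sup>2 * (2 * \<epsilon> * L\<^sup>2) \<le> \<alpha> * E\<^sup>2 * \<mu>"
    using eps_L alpha_pos by (intro mult_left_mono) auto
  moreover have "2 * Ra\<^sup>2 * (\<epsilon> * (1 + K\<^sup>2 / \<alpha>)) \<le> 2 * Ra\<^sup>2 * 1"
    using eps_K by (intro mult_left_mono) auto
  ultimately show ?thesis
    unfolding perturbed_energy_rate_def E_def[symmetric] Ra_def[symmetric] Q_def[symmetric]
      ge_def[symmetric] qg_def[symmetric] qr_def[symmetric]
    by (simp add: algebra_simps)
qed

lemma perturbed_energy_rate_le_energy:
  assumes "\<epsilon> > 0" and "cs \<ge> 0" and coercive: "cs * norm (l_err t) \<le> norm (l_err t v* A)"
    and rate: "perturbed_energy_rate \<epsilon> t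
      \<le> - \<alpha> * \<mu> * (norm (x_err t))\<^sup>2 - \<epsilon> * \<alpha> * (norm (l_err t v* A))\<^sup>2"
  shows "perturbed_energy_rate \<epsilon> t \<le> - min (\<alpha> * \<mu>) (\<epsilon> * cs\<^sup>2) * energy t"
proof -
  define E N where "E = norm (x_err t)" and "N = norm (l_err t)"
  have "(cs * N)\<^sup>2 \<le> (norm (l_err t v* A))\<^sup>2"
    using coercive \<open>cs \<ge> 0\<close> unfolding N_def by (intro power_mono) auto
  then have "\<epsilon> * \<alpha> * (cs * N)\<^sup>2 \<le> \<epsilon> * \<alpha> * (norm (l_err t v* A))\<^sup>2"
    using \<open>\<epsilon> > 0\<close> alpha_pos by (intro mult_left_mono) auto
  then have "perturbed_energy_rate \<epsilon> t \<le> - \<alpha> * \<mu> * E\<^sup>2 - \<epsilon> * \<alpha> * (cs * N)\<^sup>2"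
    using rate unfolding E_def by linarith
  also have "\<dots> \<le> - min (\<alpha> * \<mu>) (\<epsilon> * cs\<^sup>2) * energy t"
  proof -
    have "min (\<alpha> * \<mu>) (\<epsilon> * cs\<^sup>2) * E\<^sup>2 \<le> \<alpha> * \<mu> * E\<^sup>2"
      "min (\<alpha> * \<mu>) (\<epsilon> * cs\<^sup>2) * (\<alpha> * N\<^sup>2) \<le> \<epsilon> * cs\<^sup>2 * (\<alpha> * N\<^sup>2)"
      using alpha_pos by (intro mult_right_mono; simp)+
    then show ?thesis
      unfolding energy_def E_def[symmetric] N_def[symmetric] by (simp add: algebra_simps)
  qed
  finally show ?thesis .
qed

lemma grad_err_lipschitz_bound:
  obtains L where "\<And>t. t \<ge> 0 \<Longrightarrow> norm (grad_err t) \<le> L * norm (x_err t)"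
proof -
  obtain L where L: "L-lipschitz_on (cball xs (sqrt (energy 0))) G"
    using locally_lipschitz_imp_lipschitz_on_compact[OF G_locally_lipschitz compact_cball] by blast
  have "norm (grad_err t) \<le> L * norm (x_err t)" if "t \<ge> 0" for t
  proof -
    have "x t \<in> cball xs (sqrt (energy 0))" "xs \<in> cball xs (sqrt (energy 0))"
      using x_err_bounded[OF that] energy_nonneg by (auto simp: dist_norm norm_minus_commute)
    then show ?thesis
      using lipschitz_on_normD[OF L] by blast
  qed
  then show thesis by (rule that)
qed

lemma small_perturbation_parameter:
  assumes "0 \<le> K"
  obtains \<epsilon> where "\<epsilon> > 0" "\<epsilon> * K \<le> min 1 \<alpha> / 2" "2 * \<epsilon> * L\<^sup>2 \<le> \<mu>" "\<epsilon> * (1 + K\<^sup>2 / \<alpha>) \<le> 1"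
proof -
  define M where "M = 1 + K\<^sup>2 / \<alpha> + 2 * K / min 1 \<alpha> + 2 * L\<^sup>2 / \<mu>"
  define \<epsilon> where "\<epsilon> = 1 / M"
  have nonneg: "0 \<le> K\<^sup>2 / \<alpha>" "0 \<le> 2 * K / min 1 \<alpha>" "0 \<le> 2 * L\<^sup>2 / \<mu>"
    using assms alpha_pos mu_pos by auto
  then have "1 \<le> M"
    unfolding M_def by simp
  then have "\<epsilon> > 0" and small: "\<And>X. 0 \<le> X \<Longrightarrow> X \<le> M \<Longrightarrow> \<epsilon> * X \<le> 1"
    unfolding \<epsilon>_def by (auto simp: divide_le_eq)
  have "\<epsilon> * (2 * K / min 1 \<alpha>) \<le> 1" "\<epsilon> * (2 * L\<^sup>2 / \<mu>) \<le> 1" "\<epsilon> * (1 + K\<^sup>2 / \<alpha>) \<le> 1"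
    using nonneg by (intro small; auto simp: M_def)+
  moreover from this(1) have "\<epsilon> * K \<le> min 1 \<alpha> / 2"
    using alpha_pos by (simp add: field_simps)
  moreover from calculation(2) have "2 * \<epsilon> * L\<^sup>2 \<le> \<mu>"
    using mu_pos by (simp add: field_simps)
  ultimately show thesis
    using \<open>\<epsilon> > 0\<close> that by blast
qed

lemma energy_exponential_decay:
  obtains c where "c > 0" "\<And>t. t \<ge> 0 \<Longrightarrow> energy t \<le> 3 * energy 0 * exp (- c * t)"
proof -
  obtain L where L: "\<And>t. t \<ge> 0 \<Longrightarrow> norm (grad_err t) \<le> L * norm (x_err t)"
    using grad_err_lipschitz_bound by blast
  obtain K where K: "0 \<le> K" "\<And>z. norm (A *v z) \<le> K * norm z" "\<And>v. norm (v v* A) \<le> K * norm v"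
    using matrix_norm_bound[of A] by blast
  obtain cs where cs: "cs > 0" "\<And>u. u \<in> range ((*v) A) \<Longrightarrow> cs * norm u \<le> norm (u v* A)"
    using vector_matrix_bounded_below_on_column_space[of A] by blast
  obtain \<epsilon> where \<epsilon>: "\<epsilon> > 0" "\<epsilon> * K \<le> min 1 \<alpha> / 2" "2 * \<epsilon> * L\<^sup>2 \<le> \<mu>" "\<epsilon> * (1 + K\<^sup>2 / \<alpha>) \<le> 1"
    using small_perturbation_parameter[OF K(1)] by blast
  define \<kappa> where "\<kappa> = min (\<alpha> * \<mu>) (\<epsilon> * cs\<^sup>2)"
  have "\<kappa> > 0"
    unfolding \<kappa>_def using alpha_pos mu_pos \<epsilon>(1) cs(1) by simp
  note bounds = perturbed_energy_bounds[OF less_imp_le[OF \<epsilon>(1)] K(1,2) \<epsilon>(2)]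
  have decay: "perturbed_energy \<epsilon> t \<le> perturbed_energy \<epsilon> 0 * exp (- (2 * \<kappa> / 3) * t)"
    if "t \<ge> 0" for t
  proof (rule exponential_decay_of_derivative_bound[OF _ that])
    fix s :: real assume "s \<ge> 0"
    have "perturbed_energy_rate \<epsilon> s \<le> - \<kappa> * energy s"
      unfolding \<kappa>_def
      by (rule perturbed_energy_rate_le_energy[OF \<epsilon>(1) less_imp_le[OF cs(1)]
            cs(2)[OF l_err_in_column_space[OF \<open>s \<ge> 0\<close>]]
            perturbed_energy_rate_le[OF \<epsilon>(1) K(3) L[OF \<open>s \<ge> 0\<close>] \<epsilon>(3,4)]])
    also have "\<dots> \<le> - (2 * \<kappa> / 3) * perturbed_energy \<epsilon> s"
      using bounds(2)[of s] \<open>\<kappa> > 0\<close> by (simp add: mult_left_mono)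
    finally show "\<exists>D. (perturbed_energy \<epsilon> has_real_derivative D) (at s within {0..})
        \<and> D \<le> - (2 * \<kappa> / 3) * perturbed_energy \<epsilon> s"
      using perturbed_energy_derivative[OF \<open>s \<ge> 0\<close>] by blast
  qed
  show thesis
  proof (rule that)
    show "2 * \<kappa> / 3 > 0"
      using \<open>\<kappa> > 0\<close> by simp
    fix t :: real assume "t \<ge> 0"
    have "energy t \<le> 2 * perturbed_energy \<epsilon> t"
      using bounds(1)[of t] by simp
    also have "\<dots> \<le> 2 * perturbed_energy \<epsilon> 0 * exp (- (2 * \<kappa> / 3) * t)"
      using decay[OF \<open>t \<ge> 0\<close>] by simp
    also have "\<dots> \<le> 3 * energy 0 * exp (- (2 * \<kappa> / 3) * t)"
      using bounds(2)[of 0] by (intro mult_right_mono) auto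
    finally show "energy t \<le> 3 * energy 0 * exp (- (2 * \<kappa> / 3) * t)" .
  qed
qed

lemma exponential_convergence:
  "\<exists>C c. C > 0 \<and> c > 0 \<and> (\<forall>t\<ge>0. norm (x t - xs, l t - ls) \<le> C * exp (- c * t))"
proof -
  obtain c where "c > 0" and decay: "\<And>t. t \<ge> 0 \<Longrightarrow> energy t \<le> 3 * energy 0 * exp (- c * t)"
    using energy_exponential_decay by blast
  define m where "m = min 1 \<alpha>"
  define B where "B = sqrt (3 * energy 0 / m)"
  have "m > 0"
    unfolding m_def using alpha_pos by simp
  have "norm (x_err t, l_err t) \<le> B * exp (- (c / 2) * t)" if "t \<ge> 0" for t
  proof (rule power2_le_imp_le)
    have "m * (norm (x_err t, l_err t))\<^sup>2 \<le> energy t"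
    proof -
      have "m * (norm (x_err t))\<^sup>2 \<le> 1 * (norm (x_err t))\<^sup>2"
        "m * (norm (l_err t))\<^sup>2 \<le> \<alpha> * (norm (l_err t))\<^sup>2"
        unfolding m_def by (intro mult_right_mono; simp)+
      then show ?thesis
        unfolding energy_def by (simp add: norm_Pair algebra_simps)
    qed
    also have "\<dots> \<le> 3 * energy 0 * exp (- c * t)"
      by (rule decay[OF that])
    also have "\<dots> = m * (B * exp (- (c / 2) * t))\<^sup>2"
    proof -
      have "B\<^sup>2 = 3 * energy 0 / m"
        using \<open>m > 0\<close> energy_nonneg[of 0] by (simp add: B_def)
      moreover have "(exp (- (c / 2) * t))\<^sup>2 = exp (- c * t)"
        by (simp add: power2_eq_square flip: exp_add)
      ultimately show ?thesis
        using \<open>m > 0\<close> by (simp add: power_mult_distrib)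
    qed
    finally show "(norm (x_err t, l_err t))\<^sup>2 \<le> (B * exp (- (c / 2) * t))\<^sup>2"
      using \<open>m > 0\<close> by simp
    show "0 \<le> B * exp (- (c / 2) * t)"
      using \<open>m > 0\<close> energy_nonneg[of 0] unfolding B_def by simp
  qed
  moreover have "B * exp (- (c / 2) * t) \<le> (B + 1) * exp (- (c / 2) * t)" for t
    by (simp add: mult_right_mono)
  ultimately have "\<forall>t\<ge>0. norm (x_err t, l_err t) \<le> (B + 1) * exp (- (c / 2) * t)"
    using order_trans by blast
  moreover have "B + 1 > 0"
    using \<open>m > 0\<close> energy_nonneg[of 0] unfolding B_def by (simp add: add_nonneg_pos)
  ultimately show ?thesis
    using \<open>c > 0\<close> by (intro exI[of _ "B + 1"] exI[of _ "c / 2"]) auto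
qed

end

theorem proposition2:
  fixes blk :: "'d::finite \<Rightarrow> 'n::finite"
    and fi :: "'n \<Rightarrow> real^'d \<Rightarrow> real"
    and gradf :: "'n \<Rightarrow> real^'d \<Rightarrow> real^'d"
    and mu :: "'n \<Rightarrow> real"
    and A :: "real^'d^'p::finite"
    and b :: "real^'p"
    and \<alpha> :: real
    and x :: "real \<Rightarrow> real^'d"
    and l :: "real \<Rightarrow> real^'p"
  assumes block_dep: "\<And>i z. fi i z = fi i (block_proj blk i z)"
    and grad: "\<And>i z. GDERIV (fi i) z :> gradf i z"
    and lip: "\<And>i. locally_lipschitz (gradf i)"
    and mu_pos: "\<And>i. mu i > 0"
    and sconv: "\<And>i. strongly_convex_on (block_space blk i) (fi i) (mu i)"
    and feasible: "\<exists>z. A *v z = b"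
    and optimal: "\<exists>z. A *v z = b \<and> (\<forall>y. A *v y = b \<longrightarrow> (\<Sum>i\<in>UNIV. fi i z) \<le> (\<Sum>i\<in>UNIV. fi i y))"
    and alpha_pos: "\<alpha> > 0"
    and ode_x: "\<And>t. t \<ge> 0 \<Longrightarrow>
        (x has_vector_derivative
           (- \<alpha> *\<^sub>R ((\<Sum>i\<in>UNIV. gradf i (x t)) + transpose A *v l t)
            - transpose A *v (A *v x t - b))) (at t within {0..})"
    and ode_l: "\<And>t. t \<ge> 0 \<Longrightarrow>
        (l has_vector_derivative (A *v x t - b)) (at t within {0..})"
    and l0: "l 0 = 0"
  shows "\<exists>xs ls. saddle_point (aug_lagrangian \<alpha> (\<lambda>z. \<Sum>i\<in>UNIV. fi i z) A b) xs ls \<and>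
           (\<exists>C c. C > 0 \<and> c > 0 \<and>
              (\<forall>t\<ge>0. norm (x t - xs, l t - ls) \<le> C * exp (- c * t)))"
proof -
  define f where "f z = (\<Sum>i\<in>UNIV. fi i z)" for z
  define G where "G z = (\<Sum>i\<in>UNIV. gradf i z)" for z
  define \<mu> where "\<mu> = Min (range mu)"
  have "\<mu> > 0"
    unfolding \<mu>_def using mu_pos by simp
  have sc: "strongly_convex_on UNIV f \<mu>"
    unfolding f_def[abs_def] \<mu>_def by (rule strongly_convex_on_block_sum[OF block_dep sconv])
  have grad_f: "GDERIV f z :> G z" for z
    using has_derivative_sum[of UNIV "\<lambda>i. fi i" "\<lambda>i h. h \<bullet> gradf i z" "at z"] grad
    by (simp add: gderiv_def f_def[abs_def] G_def inner_sum_right)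
  obtain xs where xs: "A *v xs = b" and xs_min: "\<And>y. A *v y = b \<Longrightarrow> f xs \<le> f y"
    using optimal unfolding f_def by blast
  obtain ls where ls: "ls \<in> range ((*v) A)" and kkt: "G xs + ls v* A = 0"
    and saddle: "saddle_point (aug_lagrangian \<alpha> f A b) xs ls"
    using constrained_minimum_saddle_point[OF sc less_imp_le[OF \<open>\<mu> > 0\<close>] grad_f
        less_imp_le[OF alpha_pos] xs xs_min] by blast
  interpret primal_dual_flow A b G \<alpha> \<mu> x l xs ls
  proof
    show "\<mu> * (norm (u - v))\<^sup>2 \<le> (G u - G v) \<bullet> (u - v)" for u v
      using strongly_convex_on_gradient_monotone[OF sc UNIV_I UNIV_I grad_f grad_f] .
    show "locally_lipschitz G"
      unfolding G_def[abs_def] by (rule locally_lipschitz_sum) (auto intro: lip)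
    show "(x has_vector_derivative
        - \<alpha> *\<^sub>R (G (x t) + transpose A *v l t) - transpose A *v (A *v x t - b))
        (at t within {0..})" if "t \<ge> 0" for t
      using ode_x[OF that] unfolding G_def .
  qed (fact alpha_pos \<open>\<mu> > 0\<close> xs kkt ls ode_l l0)+
  show ?thesis
    using saddle exponential_convergence unfolding f_def[abs_def] by blast
qed

end
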